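(* Let $f_1,\dots,f_n:\mathbb{R}^d\to\mathbb{R}$ be such that each $f_i$ is $L_i$-smooth and $\mu_i$-strongly convex, with minimizer $x_i$. Let $\alpha_1,\dots,\alpha_n\in(0,1)$, $\tilde f(x) = \frac{1}{n}\sum_{i=1}^n f_i(\alpha_i x + (1-\alpha_i)x_i)$, $\hat L = \frac{1}{n}\sum_i L_i$, $\hat\mu = \frac{1}{n}\sum_i \mu_i$, $L_\alpha = \frac{1}{n}\sum_i \alpha_i^2 L_i$, $\mu_\alpha = \frac{1}{n}\sum_i\alpha_i^2\mu_i$, $w_i = \frac{\alpha_i^2 L_i}{nL_\alpha}$, $x^{\mathrm{avg}} = \sum_i w_i x_i$, $D = \max_{i\neq j}\|x_i-x_j\|^2$ and $V = \sum_i w_i\|x_i - x^{\mathrm{avg}}\|^2$. Run distributed gradient descent $x^{k+1} = x^k - \frac{\gamma}{n}\sum_{i=1}^n \alpha_i \nabla f_i(\alpha_i x^k + (1-\alpha_i)x_i)$ with stepsize $\gamma = 1/L_\alpha$, starting from $x^0 = x^{\mathrm{avg}}$. Then for every $K \geq 0$: (i) with $\alpha_{\max} = \max_i \alpha_i$, $\tilde f(x^K) - \min_x \tilde f(x) \leq \left(1 - \frac{\mu_\alpha}{L_\alpha}\right)^K \frac{\alpha_{\max}^2 \hat L D}{2}$; (ii) if $\alpha_i = \beta$ for all $i$, then $\tilde f(x^K) - \min_x\tilde f(x) \leq \left(1 - \frac{\hat\mu}{\hat L}\right)^K \frac{\beta^2\hat L V}{2}$.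
   Context: A differentiable $g$ is $L$-smooth if $\|\nabla g(x)-\nabla g(y)\|\leq L\|x-y\|$ for all $x,y$, and $\mu$-strongly convex if $g(x)\geq g(y)+\langle\nabla g(y),x-y\rangle+\frac{\mu}{2}\|x-y\|^2$ for all $x,y$. *)

theory Defs
  imports "HOL-Analysis.Analysis"
begin

definition is_gradient :: "('a::real_inner \<Rightarrow> real) \<Rightarrow> ('a \<Rightarrow> 'a) \<Rightarrow> bool" where
  "is_gradient f g \<longleftrightarrow> (\<forall>x. (f has_derivative (\<lambda>h. g x \<bullet> h)) (at x))"

definition L_smooth :: "real \<Rightarrow> ('a::real_inner \<Rightarrow> real) \<Rightarrow> ('a \<Rightarrow> 'a) \<Rightarrow> bool" where
  "L_smooth L f g \<longleftrightarrow> is_gradient f g \<and> (\<forall>x y. norm (g x - g y) \<le> L * norm (x - y))"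

definition strongly_convex :: "real \<Rightarrow> ('a::real_inner \<Rightarrow> real) \<Rightarrow> ('a \<Rightarrow> 'a) \<Rightarrow> bool" where
  "strongly_convex \<mu> f g \<longleftrightarrow> is_gradient f g \<and>
     (\<forall>x y. f x \<ge> f y + g y \<bullet> (x - y) + \<mu> / 2 * (norm (x - y))\<^sup>2)"

end

theory Submission
  imports Defs
begin

text \<open>With the gradient \<open>(1/n) \<Sum> \<alpha>\<^sub>i \<nabla>f\<^sub>i(\<alpha>\<^sub>i x + (1 - \<alpha>\<^sub>i) x\<^sub>i)\<close>, the rescaled
  objective \<open>f_tilde\<close> is \<open>L_alpha\<close>-smooth and \<open>mu_alpha\<close>-strongly convex, so the iteration is plain
  gradient descent on it with step \<open>1/L_alpha\<close>. The descent lemma together with the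
  Polyak-Lojasiewicz inequality shrinks the optimality gap by the factor \<open>1 - mu_alpha/L_alpha\<close>
  in every step. Each \<open>f\<^sub>i\<close> grows at most quadratically away from its minimiser, which bounds the
  initial gap at \<open>x_avg\<close> by \<open>L_alpha V / 2\<close>; finally \<open>V \<le> D\<close> since \<open>x_avg\<close> is a convex
  combination of the minimisers, \<open>L_alpha \<le> \<alpha>\<^sub>m\<^sub>a\<^sub>x\<^sup>2 L_hat\<close>, and for equal \<open>\<alpha>\<^sub>i = \<beta>\<close> both
  \<open>L_alpha\<close> and \<open>mu_alpha\<close> carry the common factor \<open>\<beta>\<^sup>2\<close>.\<close>

section \<open>Gradient descent on smooth strongly convex functions\<close>

lemma L_smooth_quadratic_upper_bound:
  fixes f :: "'a::real_inner \<Rightarrow> real"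
  assumes "L_smooth L f g"
  shows "f y \<le> f x + g x \<bullet> (y - x) + L / 2 * (norm (y - x))\<^sup>2"
proof -
  have grad: "is_gradient f g" and lip: "\<And>u v. norm (g u - g v) \<le> L * norm (u - v)"
    using assms unfolding L_smooth_def by auto
  define h where "h = y - x"
  define \<phi> where "\<phi> = (\<lambda>t. f (x + t *\<^sub>R h) - t * (g x \<bullet> h) - L / 2 * t\<^sup>2 * (norm h)\<^sup>2)"
  have deriv: "(\<phi> has_real_derivative (g (x + t *\<^sub>R h) - g x) \<bullet> h - L * t * (norm h)\<^sup>2) (at t)"
    for t
  proof -
    have line: "((\<lambda>t. x + t *\<^sub>R h) has_derivative (\<lambda>s. s *\<^sub>R h)) (at t)"
      by (auto intro!: derivative_eq_intros)
    have "(f has_derivative (\<lambda>k. g (x + t *\<^sub>R h) \<bullet> k)) (at (x + t *\<^sub>R h))"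
      using grad unfolding is_gradient_def by blast
    from has_derivative_compose[OF line this]
    have "((\<lambda>t. f (x + t *\<^sub>R h)) has_derivative (\<lambda>s. (g (x + t *\<^sub>R h) \<bullet> h) * s)) (at t)"
      by (simp add: mult.commute)
    then have "((\<lambda>t. f (x + t *\<^sub>R h)) has_real_derivative g (x + t *\<^sub>R h) \<bullet> h) (at t)"
      by (simp add: has_field_derivative_def)
    then show ?thesis
      unfolding \<phi>_def by (auto intro!: derivative_eq_intros simp: inner_diff_left)
  qed
  have "\<phi> 1 \<le> \<phi> 0"
  proof (rule DERIV_nonpos_imp_nonincreasing[of 0 1 \<phi>])
    fix t :: real assume t: "0 \<le> t" "t \<le> 1"
    have "(g (x + t *\<^sub>R h) - g x) \<bullet> h \<le> norm (g (x + t *\<^sub>R h) - g x) * norm h"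
      by (rule norm_cauchy_schwarz)
    also have "\<dots> \<le> L * norm (t *\<^sub>R h) * norm h"
      using lip[of "x + t *\<^sub>R h" x] by (simp add: mult_right_mono)
    also have "\<dots> = L * t * (norm h)\<^sup>2"
      using t by (simp add: power2_eq_square)
    finally show "\<exists>d. (\<phi> has_real_derivative d) (at t) \<and> d \<le> 0"
      using deriv[of t] by (intro exI[of _ "(g (x + t *\<^sub>R h) - g x) \<bullet> h - L * t * (norm h)\<^sup>2"]) simp
  qed simp
  then show ?thesis
    unfolding \<phi>_def h_def by simp
qed

lemma is_gradient_zero_at_minimum:
  assumes "is_gradient f g" and "\<And>y. f x \<le> f y"
  shows "g x = 0"
proof -
  have "(f has_derivative (\<lambda>h. g x \<bullet> h)) (at x)"
    using assms(1) unfolding is_gradient_def by blast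
  then have "(\<lambda>h. g x \<bullet> h) = (\<lambda>h. 0)"
    by (rule has_derivative_local_min) (use assms(2) in simp)
  then have "g x \<bullet> g x = 0"
    by meson
  then show ?thesis
    by simp
qed

lemma L_smooth_gap_at_minimum:
  fixes f :: "'a::real_inner \<Rightarrow> real"
  assumes "L_smooth L f g" and "\<And>z. f x \<le> f z"
  shows "f y - f x \<le> L / 2 * (norm (y - x))\<^sup>2"
proof -
  have "g x = 0"
    using assms unfolding L_smooth_def by (blast intro: is_gradient_zero_at_minimum)
  then show ?thesis
    using L_smooth_quadratic_upper_bound[OF assms(1), of y x] by simp
qed

lemma L_smooth_gradient_step_decrease:
  fixes f :: "'a::real_inner \<Rightarrow> real"
  assumes "L_smooth L f g" and "L > 0"
  shows "f (x - (1 / L) *\<^sub>R g x) \<le> f x - (norm (g x))\<^sup>2 / (2 * L)"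
proof -
  let ?y = "x - (1 / L) *\<^sub>R g x"
  have "f ?y \<le> f x + g x \<bullet> (?y - x) + L / 2 * (norm (?y - x))\<^sup>2"
    using assms(1) by (rule L_smooth_quadratic_upper_bound)
  also have "\<dots> = f x - (norm (g x))\<^sup>2 / (2 * L)"
    using assms(2) by (simp add: power2_norm_eq_inner field_simps) (simp add: power2_eq_square)
  finally show ?thesis .
qed

lemma strongly_convex_PL_inequality:
  fixes f :: "'a::real_inner \<Rightarrow> real"
  assumes "strongly_convex \<mu> f g" and "\<mu> > 0"
  shows "f x - (norm (g x))\<^sup>2 / (2 * \<mu>) \<le> (INF y. f y)"
proof (rule cINF_greatest)
  fix y
  have "0 \<le> (norm (g x + \<mu> *\<^sub>R (y - x)))\<^sup>2"
    by simp
  also have "\<dots> = (norm (g x))\<^sup>2 + 2 * \<mu> * (g x \<bullet> (y - x)) + \<mu>\<^sup>2 * (norm (y - x))\<^sup>2"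
    by (simp only: power2_norm_eq_inner)
      (simp add: inner_add_left inner_add_right power2_eq_square inner_commute algebra_simps)
  finally have "- (norm (g x))\<^sup>2 / (2 * \<mu>) \<le> g x \<bullet> (y - x) + \<mu> / 2 * (norm (y - x))\<^sup>2"
    using assms(2) by (simp add: field_simps power2_eq_square)
  moreover have "f y \<ge> f x + g x \<bullet> (y - x) + \<mu> / 2 * (norm (y - x))\<^sup>2"
    using assms(1) unfolding strongly_convex_def by blast
  ultimately show "f x - (norm (g x))\<^sup>2 / (2 * \<mu>) \<le> f y"
    by linarith
qed simp

lemma strong_convexity_le_smoothness:
  fixes f :: "'a::euclidean_space \<Rightarrow> real"
  assumes "L_smooth L f g" and "strongly_convex \<mu> f g"
  shows "\<mu> \<le> L"
proof -
  have lip: "norm (g x - g y) \<le> L * norm (x - y)" for x y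
    using assms(1) unfolding L_smooth_def by blast
  have convex: "f x \<ge> f y + g y \<bullet> (x - y) + \<mu> / 2 * (norm (x - y))\<^sup>2" for x y
    using assms(2) unfolding strongly_convex_def by blast
  obtain b :: 'a where "b \<in> Basis"
    using nonempty_Basis by blast
  then have b: "norm b = 1"
    by simp
  have "\<mu> \<le> (g b - g 0) \<bullet> b"
    using convex[of b 0] convex[of 0 b] b by (simp add: inner_diff_left)
  also have "\<dots> \<le> norm (g b - g 0) * norm b"
    by (rule norm_cauchy_schwarz)
  also have "\<dots> \<le> L"
    using lip[of b 0] b by simp
  finally show ?thesis .
qed

lemma gradient_step_gap_contraction:
  fixes f :: "'a::real_inner \<Rightarrow> real"
  assumes "L_smooth L f g" and "strongly_convex \<mu> f g" and "\<mu> > 0" and "L > 0"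
  shows "f (x - (1 / L) *\<^sub>R g x) - (INF y. f y) \<le> (1 - \<mu> / L) * (f x - (INF y. f y))"
proof -
  have "(\<mu> / L) * (f x - (INF y. f y)) \<le> (\<mu> / L) * ((norm (g x))\<^sup>2 / (2 * \<mu>))"
    using strongly_convex_PL_inequality[OF assms(2,3), of x] assms(3,4)
    by (intro mult_left_mono) auto
  also have "\<dots> = (norm (g x))\<^sup>2 / (2 * L)"
    using assms(3,4) by (simp add: field_simps)
  finally show ?thesis
    using L_smooth_gradient_step_decrease[OF assms(1,4), of x] by (simp add: algebra_simps)
qed

lemma gradient_descent_linear_convergence:
  fixes f :: "'a::euclidean_space \<Rightarrow> real"
  assumes smooth: "L_smooth L f g" and convex: "strongly_convex \<mu> f g" and "\<mu> > 0"
    and iter: "\<And>k. x (Suc k) = x k - (1 / L) *\<^sub>R g (x k)"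
  shows "f (x k) - (INF y. f y) \<le> (1 - \<mu> / L) ^ k * (f (x 0) - (INF y. f y))"
proof (induction k)
  case (Suc k)
  have "\<mu> \<le> L"
    using smooth convex by (rule strong_convexity_le_smoothness)
  then have rate: "0 \<le> 1 - \<mu> / L" "L > 0"
    using \<open>\<mu> > 0\<close> by auto
  have "f (x (Suc k)) - (INF y. f y) \<le> (1 - \<mu> / L) * (f (x k) - (INF y. f y))"
    unfolding iter using smooth convex \<open>\<mu> > 0\<close> rate(2) by (rule gradient_step_gap_contraction)
  also have "\<dots> \<le> (1 - \<mu> / L) * ((1 - \<mu> / L) ^ k * (f (x 0) - (INF y. f y)))"
    using Suc rate(1) by (rule mult_left_mono)
  finally show ?case
    by simp
qed simp

section \<open>Affine reparametrisation, sums and nonnegative multiples\<close>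

lemma is_gradient_affine_comp:
  assumes "is_gradient f g"
  shows "is_gradient (\<lambda>x. f (a *\<^sub>R x + b)) (\<lambda>x. a *\<^sub>R g (a *\<^sub>R x + b))"
  unfolding is_gradient_def
proof
  fix x
  have affine: "((\<lambda>x. a *\<^sub>R x + b) has_derivative (\<lambda>h. a *\<^sub>R h)) (at x)"
    by (auto intro!: derivative_eq_intros)
  have "(f has_derivative (\<lambda>h. g (a *\<^sub>R x + b) \<bullet> h)) (at (a *\<^sub>R x + b))"
    using assms unfolding is_gradient_def by blast
  from has_derivative_compose[OF affine this]
  show "((\<lambda>x. f (a *\<^sub>R x + b)) has_derivative (\<lambda>h. a *\<^sub>R g (a *\<^sub>R x + b) \<bullet> h)) (at x)"
    by simp
qed

lemma L_smooth_affine_comp: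
  assumes "L_smooth L f g"
  shows "L_smooth (a\<^sup>2 * L) (\<lambda>x. f (a *\<^sub>R x + b)) (\<lambda>x. a *\<^sub>R g (a *\<^sub>R x + b))"
  unfolding L_smooth_def
proof (intro conjI allI)
  show "is_gradient (\<lambda>x. f (a *\<^sub>R x + b)) (\<lambda>x. a *\<^sub>R g (a *\<^sub>R x + b))"
    using assms unfolding L_smooth_def by (blast intro: is_gradient_affine_comp)
  fix x y
  have "norm (a *\<^sub>R g (a *\<^sub>R x + b) - a *\<^sub>R g (a *\<^sub>R y + b))
      = \<bar>a\<bar> * norm (g (a *\<^sub>R x + b) - g (a *\<^sub>R y + b))"
    by (simp flip: scaleR_diff_right)
  also have "\<dots> \<le> \<bar>a\<bar> * (L * norm ((a *\<^sub>R x + b) - (a *\<^sub>R y + b)))"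
    using assms unfolding L_smooth_def by (intro mult_left_mono abs_ge_zero) blast
  also have "\<dots> = a\<^sup>2 * L * norm (x - y)"
    by (simp flip: scaleR_diff_right add: power2_eq_square)
  finally show "norm (a *\<^sub>R g (a *\<^sub>R x + b) - a *\<^sub>R g (a *\<^sub>R y + b)) \<le> a\<^sup>2 * L * norm (x - y)" .
qed

lemma strongly_convex_affine_comp:
  assumes "strongly_convex \<mu> f g"
  shows "strongly_convex (a\<^sup>2 * \<mu>) (\<lambda>x. f (a *\<^sub>R x + b)) (\<lambda>x. a *\<^sub>R g (a *\<^sub>R x + b))"
  unfolding strongly_convex_def
proof (intro conjI allI)
  show "is_gradient (\<lambda>x. f (a *\<^sub>R x + b)) (\<lambda>x. a *\<^sub>R g (a *\<^sub>R x + b))"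
    using assms unfolding strongly_convex_def by (blast intro: is_gradient_affine_comp)
  fix x y
  let ?u = "a *\<^sub>R x + b" and ?v = "a *\<^sub>R y + b"
  have "f ?u \<ge> f ?v + g ?v \<bullet> (?u - ?v) + \<mu> / 2 * (norm (?u - ?v))\<^sup>2"
    using assms unfolding strongly_convex_def by blast
  moreover have "?u - ?v = a *\<^sub>R (x - y)"
    by (simp add: scaleR_diff_right)
  ultimately show "f ?u \<ge> f ?v + a *\<^sub>R g ?v \<bullet> (x - y) + a\<^sup>2 * \<mu> / 2 * (norm (x - y))\<^sup>2"
    by (simp add: power_mult_distrib mult_ac)
qed

lemma is_gradient_sum:
  assumes "\<And>i. i \<in> I \<Longrightarrow> is_gradient (f i) (g i)"
  shows "is_gradient (\<lambda>x. \<Sum>i\<in>I. f i x) (\<lambda>x. \<Sum>i\<in>I. g i x)"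
  unfolding is_gradient_def
proof
  fix x
  have "((\<lambda>x. \<Sum>i\<in>I. f i x) has_derivative (\<lambda>h. \<Sum>i\<in>I. g i x \<bullet> h)) (at x)"
    using assms by (intro has_derivative_sum) (simp add: is_gradient_def)
  then show "((\<lambda>x. \<Sum>i\<in>I. f i x) has_derivative (\<lambda>h. (\<Sum>i\<in>I. g i x) \<bullet> h)) (at x)"
    by (simp add: inner_sum_left)
qed

lemma L_smooth_sum:
  assumes "\<And>i. i \<in> I \<Longrightarrow> L_smooth (L i) (f i) (g i)"
  shows "L_smooth (\<Sum>i\<in>I. L i) (\<lambda>x. \<Sum>i\<in>I. f i x) (\<lambda>x. \<Sum>i\<in>I. g i x)"
  unfolding L_smooth_def
proof (intro conjI allI)
  show "is_gradient (\<lambda>x. \<Sum>i\<in>I. f i x) (\<lambda>x. \<Sum>i\<in>I. g i x)"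
    using assms unfolding L_smooth_def by (blast intro: is_gradient_sum)
  fix x y
  have "norm ((\<Sum>i\<in>I. g i x) - (\<Sum>i\<in>I. g i y)) \<le> (\<Sum>i\<in>I. norm (g i x - g i y))"
    by (simp flip: sum_subtractf add: norm_sum)
  also have "\<dots> \<le> (\<Sum>i\<in>I. L i * norm (x - y))"
    using assms unfolding L_smooth_def by (blast intro: sum_mono)
  finally show "norm ((\<Sum>i\<in>I. g i x) - (\<Sum>i\<in>I. g i y)) \<le> (\<Sum>i\<in>I. L i) * norm (x - y)"
    by (simp add: sum_distrib_right)
qed

lemma strongly_convex_sum:
  assumes "\<And>i. i \<in> I \<Longrightarrow> strongly_convex (\<mu> i) (f i) (g i)"
  shows "strongly_convex (\<Sum>i\<in>I. \<mu> i) (\<lambda>x. \<Sum>i\<in>I. f i x) (\<lambda>x. \<Sum>i\<in>I. g i x)"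
  unfolding strongly_convex_def
proof (intro conjI allI)
  show "is_gradient (\<lambda>x. \<Sum>i\<in>I. f i x) (\<lambda>x. \<Sum>i\<in>I. g i x)"
    using assms unfolding strongly_convex_def by (blast intro: is_gradient_sum)
  fix x y
  have "(\<Sum>i\<in>I. f i y + g i y \<bullet> (x - y) + \<mu> i / 2 * (norm (x - y))\<^sup>2) \<le> (\<Sum>i\<in>I. f i x)"
    using assms unfolding strongly_convex_def by (blast intro: sum_mono)
  then show "(\<Sum>i\<in>I. f i x) \<ge> (\<Sum>i\<in>I. f i y) + (\<Sum>i\<in>I. g i y) \<bullet> (x - y)
      + (\<Sum>i\<in>I. \<mu> i) / 2 * (norm (x - y))\<^sup>2"
    by (simp add: sum.distrib inner_sum_left sum_distrib_right sum_divide_distrib)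
qed

lemma is_gradient_scale:
  assumes "is_gradient f g"
  shows "is_gradient (\<lambda>x. c * f x) (\<lambda>x. c *\<^sub>R g x)"
  unfolding is_gradient_def
proof
  fix x
  have "((\<lambda>x. c * f x) has_derivative (\<lambda>h. c * (g x \<bullet> h))) (at x)"
    using assms unfolding is_gradient_def by (blast intro: has_derivative_mult_right)
  then show "((\<lambda>x. c * f x) has_derivative (\<lambda>h. c *\<^sub>R g x \<bullet> h)) (at x)"
    by simp
qed

lemma L_smooth_scale:
  assumes "L_smooth L f g" and "c \<ge> 0"
  shows "L_smooth (c * L) (\<lambda>x. c * f x) (\<lambda>x. c *\<^sub>R g x)"
  unfolding L_smooth_def
proof (intro conjI allI)
  show "is_gradient (\<lambda>x. c * f x) (\<lambda>x. c *\<^sub>R g x)"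
    using assms(1) unfolding L_smooth_def by (rule conjE) (rule is_gradient_scale)
  fix x y
  have "norm (c *\<^sub>R g x - c *\<^sub>R g y) = c * norm (g x - g y)"
    using assms(2) by (simp flip: scaleR_diff_right)
  also have "\<dots> \<le> c * (L * norm (x - y))"
    using assms unfolding L_smooth_def by (simp add: mult_left_mono)
  finally show "norm (c *\<^sub>R g x - c *\<^sub>R g y) \<le> c * L * norm (x - y)"
    by (simp add: mult.assoc)
qed

lemma strongly_convex_scale:
  assumes "strongly_convex \<mu> f g" and "c \<ge> 0"
  shows "strongly_convex (c * \<mu>) (\<lambda>x. c * f x) (\<lambda>x. c *\<^sub>R g x)"
  unfolding strongly_convex_def
proof (intro conjI allI)
  show "is_gradient (\<lambda>x. c * f x) (\<lambda>x. c *\<^sub>R g x)"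
    using assms(1) unfolding strongly_convex_def by (rule conjE) (rule is_gradient_scale)
  fix x y
  have "c * (f y + g y \<bullet> (x - y) + \<mu> / 2 * (norm (x - y))\<^sup>2) \<le> c * f x"
    using assms unfolding strongly_convex_def by (simp add: mult_left_mono)
  then show "c * f x \<ge> c * f y + c *\<^sub>R g y \<bullet> (x - y) + c * \<mu> / 2 * (norm (x - y))\<^sup>2"
    by (simp add: algebra_simps)
qed

section \<open>The rescaled objective\<close>

lemma weighted_variance_le_diameter:
  fixes x :: "'i \<Rightarrow> 'a::real_normed_vector"
  assumes "finite I" and w: "\<And>i. i \<in> I \<Longrightarrow> 0 \<le> w i" "sum w I = 1"
    and diam: "\<And>i j. i \<in> I \<Longrightarrow> j \<in> I \<Longrightarrow> (norm (x i - x j))\<^sup>2 \<le> D"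
  shows "(\<Sum>i\<in>I. w i * (norm (x i - (\<Sum>j\<in>I. w j *\<^sub>R x j)))\<^sup>2) \<le> D"
proof -
  have "(norm (x i - (\<Sum>j\<in>I. w j *\<^sub>R x j)))\<^sup>2 \<le> D" if "i \<in> I" for i
  proof -
    have "0 \<le> D"
      using diam[OF that that] by simp
    have "(\<Sum>j\<in>I. w j *\<^sub>R x j) \<in> cball (x i) (sqrt D)"
      using assms that by (intro convex_sum) (auto simp: dist_norm real_le_rsqrt)
    then have "(norm (x i - (\<Sum>j\<in>I. w j *\<^sub>R x j)))\<^sup>2 \<le> (sqrt D)\<^sup>2"
      by (intro power_mono) (auto simp: dist_norm)
    with \<open>0 \<le> D\<close> show ?thesis
      by simp
  qed
  then have "(\<Sum>i\<in>I. w i * (norm (x i - (\<Sum>j\<in>I. w j *\<^sub>R x j)))\<^sup>2) \<le> (\<Sum>i\<in>I. w i * D)"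
    using w by (intro sum_mono mult_left_mono) auto
  also have "\<dots> = D"
    using w by (simp flip: sum_distrib_right)
  finally show ?thesis .
qed

lemma sq_dist_le_Max_sq_dist:
  fixes x :: "nat \<Rightarrow> 'a::real_normed_vector"
  assumes "i < n" and "j < n"
  shows "(norm (x i - x j))\<^sup>2 \<le> Max (insert 0 {(norm (x i - x j))\<^sup>2 | i j. i < n \<and> j < n \<and> i \<noteq> j})"
proof -
  have "finite {(norm (x i - x j))\<^sup>2 | i j. i < n \<and> j < n \<and> i \<noteq> j}"
    by (rule finite_subset[of _ "(\<lambda>(i, j). (norm (x i - x j))\<^sup>2) ` ({..<n} \<times> {..<n})"]) auto
  then show ?thesis
    using assms by (cases "i = j") (auto intro!: Max_ge)
qed

locale rescaled_objective =
  fixes n :: nat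
    and f :: "nat \<Rightarrow> 'a::euclidean_space \<Rightarrow> real"
    and g :: "nat \<Rightarrow> 'a \<Rightarrow> 'a"
    and L \<mu> \<alpha> :: "nat \<Rightarrow> real"
    and xs :: "nat \<Rightarrow> 'a"
  assumes n_pos: "n \<ge> 1"
    and smooth: "\<And>i. i < n \<Longrightarrow> L_smooth (L i) (f i) (g i)"
    and sconvex: "\<And>i. i < n \<Longrightarrow> strongly_convex (\<mu> i) (f i) (g i)"
    and mu_pos: "\<And>i. i < n \<Longrightarrow> \<mu> i > 0"
    and minimizer: "\<And>i y. i < n \<Longrightarrow> f i (xs i) \<le> f i y"
    and alpha_pos: "\<And>i. i < n \<Longrightarrow> \<alpha> i > 0"
begin

definition f_tilde :: "'a \<Rightarrow> real" where
  "f_tilde x = (1 / real n) * (\<Sum>i<n. f i (\<alpha> i *\<^sub>R x + (1 - \<alpha> i) *\<^sub>R xs i))"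

definition grad_f_tilde :: "'a \<Rightarrow> 'a" where
  "grad_f_tilde x = (1 / real n) *\<^sub>R (\<Sum>i<n. \<alpha> i *\<^sub>R g i (\<alpha> i *\<^sub>R x + (1 - \<alpha> i) *\<^sub>R xs i))"

definition L_alpha :: real where
  "L_alpha = (1 / real n) * (\<Sum>i<n. (\<alpha> i)\<^sup>2 * L i)"

definition mu_alpha :: real where
  "mu_alpha = (1 / real n) * (\<Sum>i<n. (\<alpha> i)\<^sup>2 * \<mu> i)"

definition weight :: "nat \<Rightarrow> real" where
  "weight i = (\<alpha> i)\<^sup>2 * L i / (real n * L_alpha)"

definition x_avg :: 'a where
  "x_avg = (\<Sum>i<n. weight i *\<^sub>R xs i)"

definition weighted_variance :: real where
  "weighted_variance = (\<Sum>i<n. weight i * (norm (xs i - x_avg))\<^sup>2)"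

lemma L_pos: "i < n \<Longrightarrow> L i > 0"
  using strong_convexity_le_smoothness[OF smooth sconvex] mu_pos by (meson less_le_trans)

lemma f_tilde_L_smooth: "L_smooth L_alpha f_tilde grad_f_tilde"
  unfolding f_tilde_def[abs_def] grad_f_tilde_def[abs_def] L_alpha_def using smooth
  by (intro L_smooth_scale L_smooth_sum L_smooth_affine_comp) auto

lemma f_tilde_strongly_convex: "strongly_convex mu_alpha f_tilde grad_f_tilde"
  unfolding f_tilde_def[abs_def] grad_f_tilde_def[abs_def] mu_alpha_def using sconvex
  by (intro strongly_convex_scale strongly_convex_sum strongly_convex_affine_comp) auto

lemma mu_alpha_pos: "mu_alpha > 0"
proof -
  have "(\<alpha> i)\<^sup>2 * \<mu> i > 0" if "i < n" for i
    using alpha_pos[OF that] mu_pos[OF that] by simp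
  then have "(\<Sum>i<n. (\<alpha> i)\<^sup>2 * \<mu> i) > 0"
    using n_pos by (intro sum_pos) (auto simp: lessThan_empty_iff)
  then show ?thesis
    unfolding mu_alpha_def using n_pos by simp
qed

lemma mu_alpha_le_L_alpha: "mu_alpha \<le> L_alpha"
  using f_tilde_L_smooth f_tilde_strongly_convex by (rule strong_convexity_le_smoothness)

lemma L_alpha_pos: "L_alpha > 0"
  using mu_alpha_pos mu_alpha_le_L_alpha by linarith

lemma weight_nonneg: "i < n \<Longrightarrow> 0 \<le> weight i"
  using L_alpha_pos L_pos unfolding weight_def by (simp add: less_imp_le)

lemma sum_weight: "(\<Sum>i<n. weight i) = 1"
  using L_alpha_pos n_pos unfolding weight_def L_alpha_def
  by (simp flip: sum_divide_distrib add: field_simps)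

lemma f_tilde_gap_le: "f_tilde x - (INF y. f_tilde y) \<le> (1 / real n) * (\<Sum>i<n. (\<alpha> i)\<^sup>2 * L i / 2 * (norm (x - xs i))\<^sup>2)"
proof -
  have "(1 / real n) * (\<Sum>i<n. f i (xs i)) \<le> (INF y. f_tilde y)"
    unfolding f_tilde_def by (intro cINF_greatest mult_left_mono sum_mono minimizer) auto
  moreover have "f i (\<alpha> i *\<^sub>R x + (1 - \<alpha> i) *\<^sub>R xs i) - f i (xs i)
      \<le> (\<alpha> i)\<^sup>2 * L i / 2 * (norm (x - xs i))\<^sup>2" if "i < n" for i
  proof -
    let ?y = "\<alpha> i *\<^sub>R x + (1 - \<alpha> i) *\<^sub>R xs i"
    have shift: "?y - xs i = \<alpha> i *\<^sub>R (x - xs i)"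
      by (simp add: algebra_simps)
    have "f i ?y - f i (xs i) \<le> L i / 2 * (norm (?y - xs i))\<^sup>2"
      using smooth[OF that] minimizer[OF that] by (rule L_smooth_gap_at_minimum)
    also have "\<dots> = (\<alpha> i)\<^sup>2 * L i / 2 * (norm (x - xs i))\<^sup>2"
      unfolding shift by (simp add: power_mult_distrib)
    finally show ?thesis .
  qed
  then have "f_tilde x - (1 / real n) * (\<Sum>i<n. f i (xs i))
      \<le> (1 / real n) * (\<Sum>i<n. (\<alpha> i)\<^sup>2 * L i / 2 * (norm (x - xs i))\<^sup>2)"
    unfolding f_tilde_def right_diff_distrib[symmetric] sum_subtractf[symmetric]
    by (intro mult_left_mono sum_mono) auto
  ultimately show ?thesis
    by linarith
qed

lemma f_tilde_gap_x_avg_le: "f_tilde x_avg - (INF y. f_tilde y) \<le> L_alpha * weighted_variance / 2"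
proof -
  have "f_tilde x_avg - (INF y. f_tilde y)
      \<le> (1 / real n) * (\<Sum>i<n. (\<alpha> i)\<^sup>2 * L i / 2 * (norm (x_avg - xs i))\<^sup>2)"
    by (rule f_tilde_gap_le)
  also have "\<dots> = L_alpha * weighted_variance / 2"
    using L_alpha_pos n_pos unfolding weighted_variance_def weight_def
    by (simp add: sum_distrib_left sum_divide_distrib norm_minus_commute field_simps)
  finally show ?thesis .
qed

lemma f_tilde_gradient_descent_gap:
  assumes "\<And>k. x (Suc k) = x k - (1 / L_alpha) *\<^sub>R grad_f_tilde (x k)" and "x 0 = x_avg"
  shows "f_tilde (x k) - (INF y. f_tilde y)
    \<le> (1 - mu_alpha / L_alpha) ^ k * (L_alpha * weighted_variance / 2)"
proof -
  have "f_tilde (x k) - (INF y. f_tilde y)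
      \<le> (1 - mu_alpha / L_alpha) ^ k * (f_tilde (x 0) - (INF y. f_tilde y))"
    using f_tilde_L_smooth f_tilde_strongly_convex mu_alpha_pos assms(1)
    by (rule gradient_descent_linear_convergence)
  also have "\<dots> \<le> (1 - mu_alpha / L_alpha) ^ k * (L_alpha * weighted_variance / 2)"
    using f_tilde_gap_x_avg_le mu_alpha_le_L_alpha L_alpha_pos assms(2)
    by (intro mult_left_mono) auto
  finally show ?thesis .
qed

lemma weighted_variance_le_max_sq_dist:
  "weighted_variance \<le> Max (insert 0 {(norm (xs i - xs j))\<^sup>2 | i j. i < n \<and> j < n \<and> i \<noteq> j})"
  unfolding weighted_variance_def x_avg_def using weight_nonneg sum_weight
  by (intro weighted_variance_le_diameter sq_dist_le_Max_sq_dist) auto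

lemma weighted_variance_nonneg: "weighted_variance \<ge> 0"
  unfolding weighted_variance_def using weight_nonneg by (intro sum_nonneg) auto

lemma L_alpha_le_Max_alpha_sq: "L_alpha \<le> (Max (\<alpha> ` {..<n}))\<^sup>2 * ((1 / real n) * (\<Sum>i<n. L i))"
proof -
  have "(\<alpha> i)\<^sup>2 * L i \<le> (Max (\<alpha> ` {..<n}))\<^sup>2 * L i" if "i < n" for i
    using alpha_pos[OF that] L_pos[OF that] that
    by (intro mult_right_mono power_mono Max_ge) auto
  then have "L_alpha \<le> (1 / real n) * (\<Sum>i<n. (Max (\<alpha> ` {..<n}))\<^sup>2 * L i)"
    unfolding L_alpha_def by (intro mult_left_mono sum_mono) auto
  then show ?thesis
    by (simp add: sum_distrib_left)
qed

end

theorem theorem2: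
  fixes n :: nat
    and f :: "nat \<Rightarrow> 'a::euclidean_space \<Rightarrow> real"
    and g :: "nat \<Rightarrow> 'a \<Rightarrow> 'a"
    and L \<mu> \<alpha> :: "nat \<Rightarrow> real"
    and xs :: "nat \<Rightarrow> 'a"
    and xk :: "nat \<Rightarrow> 'a"
    and \<beta> :: real
    and K :: nat
    and ftil :: "'a \<Rightarrow> real"
    and Lhat muhat La mua D V \<gamma> amax :: real
    and w :: "nat \<Rightarrow> real"
    and xavg :: 'a
  assumes ftil_def: "ftil = (\<lambda>x. (1 / real n) * (\<Sum>i<n. f i (\<alpha> i *\<^sub>R x + (1 - \<alpha> i) *\<^sub>R xs i)))"
    and Lhat_def: "Lhat = (1 / real n) * (\<Sum>i<n. L i)"
    and muhat_def: "muhat = (1 / real n) * (\<Sum>i<n. \<mu> i)"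
    and La_def: "La = (1 / real n) * (\<Sum>i<n. (\<alpha> i)\<^sup>2 * L i)"
    and mua_def: "mua = (1 / real n) * (\<Sum>i<n. (\<alpha> i)\<^sup>2 * \<mu> i)"
    and w_def: "w = (\<lambda>i. (\<alpha> i)\<^sup>2 * L i / (real n * La))"
    and xavg_def: "xavg = (\<Sum>i<n. w i *\<^sub>R xs i)"
    and D_def: "D = Max (insert 0 {(norm (xs i - xs j))\<^sup>2 | i j. i < n \<and> j < n \<and> i \<noteq> j})"
    and V_def: "V = (\<Sum>i<n. w i * (norm (xs i - xavg))\<^sup>2)"
    and gamma_def: "\<gamma> = 1 / La"
    and amax_def: "amax = Max (\<alpha> ` {..<n})"
    and n_pos: "n \<ge> 1"
    and smooth: "\<And>i. i < n \<Longrightarrow> L_smooth (L i) (f i) (g i)"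
    and sconvex: "\<And>i. i < n \<Longrightarrow> strongly_convex (\<mu> i) (f i) (g i)"
    and mu_pos: "\<And>i. i < n \<Longrightarrow> \<mu> i > 0"
    and minimizer: "\<And>i y. i < n \<Longrightarrow> f i (xs i) \<le> f i y"
    and alpha_range: "\<And>i. i < n \<Longrightarrow> 0 < \<alpha> i \<and> \<alpha> i < 1"
    and x0: "xk 0 = xavg"
    and step: "\<And>k. xk (Suc k) = xk k - (\<gamma> / real n) *\<^sub>R
                 (\<Sum>i<n. \<alpha> i *\<^sub>R g i (\<alpha> i *\<^sub>R xk k + (1 - \<alpha> i) *\<^sub>R xs i))"
  shows "ftil (xk K) - (INF x. ftil x) \<le> (1 - mua / La) ^ K * (amax\<^sup>2 * Lhat * D / 2)
         \<and> ((\<forall>i<n. \<alpha> i = \<beta>) \<longrightarrow>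
           ftil (xk K) - (INF x. ftil x) \<le> (1 - muhat / Lhat) ^ K * (\<beta>\<^sup>2 * Lhat * V / 2))"
proof -
  interpret P: rescaled_objective n f g L \<mu> \<alpha> xs
    using n_pos smooth sconvex mu_pos minimizer alpha_range by unfold_locales auto
  have defs: "ftil = P.f_tilde" "La = P.L_alpha" "mua = P.mu_alpha" "V = P.weighted_variance"
    unfolding ftil_def P.f_tilde_def[abs_def] La_def P.L_alpha_def mua_def P.mu_alpha_def
      V_def P.weighted_variance_def xavg_def P.x_avg_def w_def P.weight_def
    by simp_all
  have "xk (Suc k) = xk k - (1 / P.L_alpha) *\<^sub>R P.grad_f_tilde (xk k)" for k
    by (simp add: step gamma_def defs P.grad_f_tilde_def)
  moreover have "xk 0 = P.x_avg"
    unfolding x0 xavg_def P.x_avg_def w_def P.weight_def La_def P.L_alpha_def ..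
  ultimately have bound: "ftil (xk K) - (INF x. ftil x) \<le> (1 - mua / La) ^ K * (La * V / 2)"
    unfolding defs by (rule P.f_tilde_gradient_descent_gap)
  have "La \<le> amax\<^sup>2 * Lhat" "V \<le> D" "0 \<le> V" "0 < La"
    unfolding defs amax_def Lhat_def D_def
    by (rule P.L_alpha_le_Max_alpha_sq P.weighted_variance_le_max_sq_dist P.weighted_variance_nonneg P.L_alpha_pos)+
  moreover have "0 \<le> (1 - mua / La) ^ K"
    unfolding defs using P.mu_alpha_le_L_alpha P.L_alpha_pos by simp
  ultimately have "(1 - mua / La) ^ K * (La * V / 2) \<le> (1 - mua / La) ^ K * (amax\<^sup>2 * Lhat * D / 2)"
    by (intro mult_left_mono divide_right_mono mult_mono) auto
  moreover have "La = \<beta>\<^sup>2 * Lhat \<and> mua = \<beta>\<^sup>2 * muhat \<and> \<beta> \<noteq> 0" if "\<forall>i<n. \<alpha> i = \<beta>"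
    using that n_pos alpha_range[of 0] unfolding La_def Lhat_def mua_def muhat_def
    by (simp add: sum_distrib_left)
  ultimately show ?thesis
    using bound by auto
qed

end
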